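(* If an unbounded ballean $X$ has bounded growth, then $X$ contains a discrete subballean.
   Context: A ballean is a pair $(X,\mathcal E_X)$ where $X$ is a set and $\mathcal E_X$ is a family of subsets of $X\times X$ (entourages) such that: each $E\in\mathcal E_X$ contains the diagonal $\Delta_X$; for any $E,F\in\mathcal E_X$ there is $D\in\mathcal E_X$ with $E\circ F^{-1}\subset D$; and $\bigcup\mathcal E_X=X\times X$. For $E\subset X\times X$, $x\in X$, $A\subset X$: $E[x]=\{y:(x,y)\in E\}$, $E[A]=\bigcup_{a\in A}E[a]$. $B\subset X$ is bounded if $B\subset E[x]$ for some $E\in\mathcal E_X$, $x\in X$; $X$ is unbounded if $X$ itself is not bounded. A subballean on $Y\subset X$ is $(Y,\{(Y\times Y)\cap E:E\in\mathcal E_X\})$. A ballean $Y$ is discrete if $Y$ is unbounded and for every entourage $E$ of $Y$ there is a bounded $B_E\subset Y$ with $E[y]=\{y\}$ for all $y\in Y\setminus B_E$. $X$ has bounded growth if there is $G\subset X\times X$ with $G[B]$ bounded for all bounded $B\subset X$, and for each $E\in\mathcal E_X$ a bounded $B$ with $E[x]\subset G[x]$ for all $x\in X\setminus B$. *)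

theory Defs
  imports Main
begin

text \<open>A ballean is modelled as a carrier set X together with a family EE of
entourages, each a subset of X \<times> X. E[x] is the relational image E `` {x}.\<close>

definition ballean :: "'a set \<Rightarrow> ('a \<times> 'a) set set \<Rightarrow> bool" where
  "ballean X EE \<longleftrightarrow>
     (\<forall>E\<in>EE. E \<subseteq> X \<times> X) \<and>
     (\<forall>E\<in>EE. Id_on X \<subseteq> E) \<and>
     (\<forall>E\<in>EE. \<forall>F\<in>EE. \<exists>D\<in>EE. E O (F\<inverse>) \<subseteq> D) \<and>
     \<Union>EE = X \<times> X"

definition bounded_in :: "'a set \<Rightarrow> ('a \<times> 'a) set set \<Rightarrow> 'a set \<Rightarrow> bool" where
  "bounded_in X EE B \<longleftrightarrow> B \<subseteq> X \<and> (\<exists>E\<in>EE. \<exists>x\<in>X. B \<subseteq> E `` {x})"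

definition unbounded :: "'a set \<Rightarrow> ('a \<times> 'a) set set \<Rightarrow> bool" where
  "unbounded X EE \<longleftrightarrow> \<not> bounded_in X EE X"

definition subballean :: "'a set \<Rightarrow> ('a \<times> 'a) set set \<Rightarrow> 'a set \<Rightarrow> ('a \<times> 'a) set set" where
  "subballean X EE Y = {(Y \<times> Y) \<inter> E | E. E \<in> EE}"

definition discrete_ballean :: "'a set \<Rightarrow> ('a \<times> 'a) set set \<Rightarrow> bool" where
  "discrete_ballean Y EE \<longleftrightarrow> unbounded Y EE \<and>
     (\<forall>E\<in>EE. \<exists>B. bounded_in Y EE B \<and> (\<forall>y\<in>Y - B. E `` {y} = {y}))"

definition bounded_growth :: "'a set \<Rightarrow> ('a \<times> 'a) set set \<Rightarrow> bool" where
  "bounded_growth X EE \<longleftrightarrow> (\<exists>G. G \<subseteq> X \<times> X \<and>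
     (\<forall>B. bounded_in X EE B \<longrightarrow> bounded_in X EE (G `` B)) \<and>
     (\<forall>E\<in>EE. \<exists>B. bounded_in X EE B \<and> (\<forall>x\<in>X - B. E `` {x} \<subseteq> G `` {x})))"

end

theory Submission
  imports Defs
begin

text \<open>Choose, by Zorn's lemma, a maximal set Y \<subseteq> X containing no two distinct points
each lying in the G-ball of the other. Maximality gives X \<subseteq> Y \<union> G[Y]; as G maps bounded
sets to bounded sets, Y cannot be bounded. For an entourage E, enlarge it to D \<supseteq> E \<union> E\<inverse>;
outside a bounded set B we have D[x] \<subseteq> G[x], so if y \<in> Y lies outside D[B] and z \<in> E[y] \<inter> Y,
then both z \<in> G[y] and y \<in> G[z], forcing z = y.\<close>

lemma ballean_entourage_subset: "ballean X EE \<Longrightarrow> E \<in> EE \<Longrightarrow> E \<subseteq> X \<times> X"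
  unfolding ballean_def by blast

lemma ballean_Id_on_subset: "ballean X EE \<Longrightarrow> E \<in> EE \<Longrightarrow> Id_on X \<subseteq> E"
  unfolding ballean_def by blast

lemma ballean_pair_in_entourage:
  assumes "ballean X EE" "x \<in> X" "z \<in> X"
  shows "\<exists>E\<in>EE. (x, z) \<in> E"
proof -
  have "(x, z) \<in> \<Union>EE"
    using assms unfolding ballean_def by simp
  then show ?thesis by blast
qed

lemma ballean_relcomp_converse_subset:
  "ballean X EE \<Longrightarrow> E \<in> EE \<Longrightarrow> F \<in> EE \<Longrightarrow> \<exists>D\<in>EE. E O F\<inverse> \<subseteq> D"
  unfolding ballean_def by meson

lemma ballean_converse_subset:
  assumes "ballean X EE" "E \<in> EE"
  shows "\<exists>D\<in>EE. E\<inverse> \<subseteq> D"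
proof -
  obtain D where "D \<in> EE" "E O E\<inverse> \<subseteq> D"
    using ballean_relcomp_converse_subset[OF assms assms(2)] by blast
  moreover have "E\<inverse> \<subseteq> E O E\<inverse>"
    using ballean_entourage_subset[OF assms] ballean_Id_on_subset[OF assms] by auto
  ultimately show ?thesis by blast
qed

lemma ballean_relcomp_subset:
  assumes "ballean X EE" "E \<in> EE" "F \<in> EE"
  shows "\<exists>D\<in>EE. E O F \<subseteq> D"
proof -
  obtain F' where "F' \<in> EE" "F\<inverse> \<subseteq> F'"
    using ballean_converse_subset[OF assms(1,3)] by blast
  moreover obtain D where "D \<in> EE" "E O F'\<inverse> \<subseteq> D"
    using ballean_relcomp_converse_subset[OF assms(1,2) \<open>F' \<in> EE\<close>] by blast
  ultimately show ?thesis by blast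
qed

lemma ballean_Un_subset:
  assumes "ballean X EE" "E \<in> EE" "F \<in> EE"
  shows "\<exists>D\<in>EE. E \<union> F \<subseteq> D"
proof -
  obtain D where "D \<in> EE" "E O F \<subseteq> D"
    using ballean_relcomp_subset[OF assms] by blast
  moreover have "E \<union> F \<subseteq> E O F"
    using ballean_entourage_subset[OF assms(1)] ballean_Id_on_subset[OF assms(1)] assms(2,3)
    by blast
  ultimately show ?thesis by blast
qed

lemma ballean_symmetric_superset:
  assumes "ballean X EE" "E \<in> EE"
  shows "\<exists>D\<in>EE. E \<subseteq> D \<and> E\<inverse> \<subseteq> D"
proof -
  obtain F where "F \<in> EE" "E\<inverse> \<subseteq> F"
    using ballean_converse_subset[OF assms] by blast
  with ballean_Un_subset[OF assms \<open>F \<in> EE\<close>] show ?thesis by blast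
qed

lemma bounded_in_subset:
  assumes "bounded_in X EE C" "B \<subseteq> C"
  shows "bounded_in X EE B"
  using assms unfolding bounded_in_def by blast

lemma bounded_in_Image:
  assumes "ballean X EE" "bounded_in X EE C" "E \<in> EE"
  shows "bounded_in X EE (E `` C)"
proof -
  obtain F x where F: "F \<in> EE" "x \<in> X" "C \<subseteq> F `` {x}"
    using assms(2) unfolding bounded_in_def by blast
  obtain D where "D \<in> EE" "F O E \<subseteq> D"
    using ballean_relcomp_subset[OF assms(1) F(1) assms(3)] by blast
  moreover have "E `` C \<subseteq> X"
    using ballean_entourage_subset[OF assms(1,3)] by blast
  ultimately show ?thesis
    using F unfolding bounded_in_def by blast
qed

lemma bounded_in_Un:
  assumes "ballean X EE" "bounded_in X EE C" "bounded_in X EE C'"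
  shows "bounded_in X EE (C \<union> C')"
proof -
  obtain F x where F: "F \<in> EE" "x \<in> X" "C \<subseteq> F `` {x}"
    using assms(2) unfolding bounded_in_def by blast
  obtain H z where H: "H \<in> EE" "z \<in> X" "C' \<subseteq> H `` {z}"
    using assms(3) unfolding bounded_in_def by blast
  obtain E where E: "E \<in> EE" "(x, z) \<in> E"
    using ballean_pair_in_entourage[OF assms(1) F(2) H(2)] by blast
  obtain K where K: "K \<in> EE" "E O H \<subseteq> K"
    using ballean_relcomp_subset[OF assms(1) E(1) H(1)] by blast
  obtain M where M: "M \<in> EE" "F \<union> K \<subseteq> M"
    using ballean_Un_subset[OF assms(1) F(1) K(1)] by blast
  have "C \<union> C' \<subseteq> M `` {x}"
    using F(3) H(3) E(2) K(2) M(2) by blast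
  then show ?thesis
    using assms M F unfolding bounded_in_def by blast
qed

lemma bounded_in_subballean_Int:
  assumes "ballean X EE" "bounded_in X EE C" "Y \<subseteq> X" "y \<in> Y"
  shows "bounded_in Y (subballean X EE Y) (Y \<inter> C)"
proof -
  obtain F x where F: "F \<in> EE" "x \<in> X" "C \<subseteq> F `` {x}"
    using assms(2) unfolding bounded_in_def by blast
  obtain E where E: "E \<in> EE" "(y, x) \<in> E"
    using ballean_pair_in_entourage[OF assms(1) _ F(2)] assms(3,4) by blast
  obtain D where D: "D \<in> EE" "E O F \<subseteq> D"
    using ballean_relcomp_subset[OF assms(1) E(1) F(1)] by blast
  have "Y \<inter> C \<subseteq> ((Y \<times> Y) \<inter> D) `` {y}"
    using F(3) E(2) D(2) assms(4) by blast
  moreover have "(Y \<times> Y) \<inter> D \<in> subballean X EE Y"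
    using D(1) unfolding subballean_def by blast
  ultimately show ?thesis
    using assms(4) unfolding bounded_in_def by blast
qed

lemma bounded_in_of_subballean:
  assumes "bounded_in Y (subballean X EE Y) B" "Y \<subseteq> X"
  shows "bounded_in X EE B"
  using assms unfolding bounded_in_def subballean_def by blast

definition separated_by :: "('a \<times> 'a) set \<Rightarrow> 'a set \<Rightarrow> bool" where
  "separated_by G Y \<longleftrightarrow> (\<forall>a\<in>Y. \<forall>b\<in>Y. (a, b) \<in> G \<and> (b, a) \<in> G \<longrightarrow> a = b)"

lemma separated_by_insert:
  assumes "separated_by G Y" "x \<notin> G `` Y"
  shows "separated_by G (insert x Y)"
  using assms unfolding separated_by_def by blast

lemma separated_by_Union_chain:
  assumes "chain\<^sub>\<subseteq> C" "\<And>Y. Y \<in> C \<Longrightarrow> separated_by G Y"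
  shows "separated_by G (\<Union>C)"
  unfolding separated_by_def
proof (intro ballI impI)
  fix a b assume "a \<in> \<Union>C" "b \<in> \<Union>C" and G_ab: "(a, b) \<in> G \<and> (b, a) \<in> G"
  then obtain Y where "Y \<in> C" "a \<in> Y" "b \<in> Y"
    using assms(1) unfolding chain_subset_def by blast
  with assms(2) G_ab show "a = b"
    unfolding separated_by_def by blast
qed

lemma exists_separated_cover:
  "\<exists>Y\<subseteq>X. separated_by G Y \<and> X \<subseteq> Y \<union> G `` Y"
proof -
  define S where "S = {Y. Y \<subseteq> X \<and> separated_by G Y}"
  have "\<Union>C \<in> S" if "C \<in> chains S" for C
  proof -
    have C: "C \<subseteq> S" "chain\<^sub>\<subseteq> C"
      using that unfolding chains_def by auto
    then have "separated_by G (\<Union>C)"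
      by (intro separated_by_Union_chain) (auto simp: S_def)
    with C(1) show ?thesis
      unfolding S_def by blast
  qed
  then obtain Y where Y: "Y \<in> S" and maximal: "\<And>Z. Z \<in> S \<Longrightarrow> Y \<subseteq> Z \<Longrightarrow> Z = Y"
    using Zorn_Lemma[of S] by blast
  have "x \<in> Y \<union> G `` Y" if "x \<in> X" for x
  proof (rule ccontr)
    assume x: "x \<notin> Y \<union> G `` Y"
    with Y \<open>x \<in> X\<close> have "insert x Y \<in> S"
      by (simp add: S_def separated_by_insert)
    with maximal x show False by blast
  qed
  then show ?thesis
    using Y unfolding S_def by blast
qed

lemma unbounded_subballean_of_cover:
  assumes "ballean X EE" "unbounded X EE" "Y \<subseteq> X" "X \<subseteq> Y \<union> G `` Y"
    and G: "\<forall>B. bounded_in X EE B \<longrightarrow> bounded_in X EE (G `` B)"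
  shows "unbounded Y (subballean X EE Y)"
  unfolding unbounded_def
proof
  assume "bounded_in Y (subballean X EE Y) Y"
  then have "bounded_in X EE Y"
    using bounded_in_of_subballean assms(3) by blast
  then have "bounded_in X EE (Y \<union> G `` Y)"
    using bounded_in_Un[OF assms(1)] G by blast
  then have "bounded_in X EE X"
    using assms(4) bounded_in_subset by blast
  with assms(2) show False
    unfolding unbounded_def by blast
qed

lemma separated_Image_singleton:
  assumes sep: "separated_by G Y" and "Y \<subseteq> X" and refl: "Id_on X \<subseteq> E"
    and D: "E \<subseteq> D" "E\<inverse> \<subseteq> D"
    and G: "\<forall>x\<in>X - B. D `` {x} \<subseteq> G `` {x}"
    and y: "y \<in> Y" "y \<notin> D `` B"
  shows "((Y \<times> Y) \<inter> E) `` {y} = {y}"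
proof -
  have "z = y" if z: "z \<in> Y" "(y, z) \<in> E" for z
  proof -
    have "y \<in> X" "z \<in> X"
      using \<open>Y \<subseteq> X\<close> y(1) z(1) by auto
    have "(y, y) \<in> D" "(y, z) \<in> D" "(z, y) \<in> D"
      using refl D \<open>y \<in> X\<close> z(2) by auto
    then have "y \<notin> B" "z \<notin> B"
      using y(2) by auto
    with G \<open>y \<in> X\<close> \<open>z \<in> X\<close> \<open>(y, z) \<in> D\<close> \<open>(z, y) \<in> D\<close>
    have "(y, z) \<in> G" "(z, y) \<in> G"
      by blast+
    with sep y(1) z(1) show ?thesis
      unfolding separated_by_def by blast
  qed
  moreover have "(y, y) \<in> E"
    using refl y(1) \<open>Y \<subseteq> X\<close> by auto
  ultimately show ?thesis
    using y(1) by blast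
qed

lemma subballean_entourage_eventually_trivial:
  assumes "ballean X EE" "Y \<subseteq> X" "separated_by G Y" "X \<subseteq> Y \<union> G `` Y"
    and G: "\<forall>E\<in>EE. \<exists>B. bounded_in X EE B \<and> (\<forall>x\<in>X - B. E `` {x} \<subseteq> G `` {x})"
    and "E' \<in> subballean X EE Y"
  shows "\<exists>B. bounded_in Y (subballean X EE Y) B \<and> (\<forall>y\<in>Y - B. E' `` {y} = {y})"
proof -
  obtain E where E: "E \<in> EE" "E' = (Y \<times> Y) \<inter> E"
    using assms(6) unfolding subballean_def by blast
  obtain D where D: "D \<in> EE" "E \<subseteq> D" "E\<inverse> \<subseteq> D"
    using ballean_symmetric_superset[OF assms(1) E(1)] by blast
  obtain B where B: "bounded_in X EE B" "\<forall>x\<in>X - B. D `` {x} \<subseteq> G `` {x}"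
    using G D(1) by blast
  have "X \<noteq> {}"
    using B(1) unfolding bounded_in_def by blast
  then obtain y0 where "y0 \<in> Y"
    using assms(4) by auto
  have "bounded_in Y (subballean X EE Y) (Y \<inter> D `` B)"
    using bounded_in_subballean_Int[OF assms(1) bounded_in_Image[OF assms(1) B(1) D(1)]
        assms(2) \<open>y0 \<in> Y\<close>] .
  moreover have "E' `` {y} = {y}" if "y \<in> Y - (Y \<inter> D `` B)" for y
    unfolding E(2)
    using separated_Image_singleton[OF assms(3,2) ballean_Id_on_subset[OF assms(1) E(1)] D(2,3) B(2)]
      that by simp
  ultimately show ?thesis by blast
qed

theorem proposition3p6:
  fixes X :: "'a set" and EE :: "('a \<times> 'a) set set"
  assumes "ballean X EE" and "unbounded X EE" and "bounded_growth X EE"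
  shows "\<exists>Y\<subseteq>X. discrete_ballean Y (subballean X EE Y)"
proof -
  obtain G where G: "\<forall>B. bounded_in X EE B \<longrightarrow> bounded_in X EE (G `` B)"
    "\<forall>E\<in>EE. \<exists>B. bounded_in X EE B \<and> (\<forall>x\<in>X - B. E `` {x} \<subseteq> G `` {x})"
    using assms(3) unfolding bounded_growth_def by blast
  obtain Y where Y: "Y \<subseteq> X" "separated_by G Y" "X \<subseteq> Y \<union> G `` Y"
    using exists_separated_cover[of X G] by blast
  have "unbounded Y (subballean X EE Y)"
    by (rule unbounded_subballean_of_cover[OF assms(1,2) Y(1,3) G(1)])
  moreover have "\<forall>E'\<in>subballean X EE Y. \<exists>B. bounded_in Y (subballean X EE Y) B \<and>
      (\<forall>y\<in>Y - B. E' `` {y} = {y})"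
    using subballean_entourage_eventually_trivial[OF assms(1) Y G(2)] by blast
  ultimately have "discrete_ballean Y (subballean X EE Y)"
    unfolding discrete_ballean_def by blast
  with Y(1) show ?thesis by blast
qed

end
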